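(* Let $c\in C_{\mathrm{SAGE}}(A)$ and suppose the index set $N=\{i\in[m]: c_i<0\}$ is nonempty. Then there exist vectors $c^{(i)}\in C_{\mathrm{AGE}}(A,i)$, $i\in N$, such that $c=\sum_{i\in N}c^{(i)}$ and $c^{(i)}_j=0$ for all distinct $i,j\in N$.
   Context: Let $A\in\mathbb{R}^{n\times m}$ have distinct columns $a_1,\dots,a_m$. For $c\in\mathbb{R}^m$, $\mathrm{Sig}(A,c)$ denotes the function $x\mapsto\sum_{i=1}^m c_i\exp(a_i^\top x)$ on $\mathbb{R}^n$. $C_{\mathrm{NNS}}(A)=\{c\in\mathbb{R}^m:\mathrm{Sig}(A,c)(x)\ge 0\ \forall x\in\mathbb{R}^n\}$. For $k\in[m]$, the $k$-th AGE cone is $C_{\mathrm{AGE}}(A,k)=\{c\in C_{\mathrm{NNS}}(A): c_i\ge 0\ \forall i\ne k\}$, and the SAGE cone is the Minkowski sum $C_{\mathrm{SAGE}}(A)=\sum_{k=1}^m C_{\mathrm{AGE}}(A,k)$. *)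

theory Defs
  imports "HOL-Analysis.Analysis"
begin

text \<open>A is an n x m real matrix (rows indexed by 'n, columns by 'm);
  the i-th column is a_i = column i A.\<close>

definition Sig :: "real^'m^'n \<Rightarrow> real^'m \<Rightarrow> real^'n \<Rightarrow> real" where
  "Sig A c x = (\<Sum>i\<in>UNIV. c $ i * exp (column i A \<bullet> x))"

definition C_NNS :: "real^'m^'n \<Rightarrow> (real^'m) set" where
  "C_NNS A = {c. \<forall>x. Sig A c x \<ge> 0}"

definition C_AGE :: "real^'m^'n \<Rightarrow> 'm \<Rightarrow> (real^'m) set" where
  "C_AGE A k = {c \<in> C_NNS A. \<forall>i. i \<noteq> k \<longrightarrow> c $ i \<ge> 0}"

definition C_SAGE :: "real^'m^'n \<Rightarrow> (real^'m) set" where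
  "C_SAGE A = {c. \<exists>f. (\<forall>k. f k \<in> C_AGE A k) \<and> c = (\<Sum>k\<in>UNIV. f k)}"

definition distinct_columns :: "real^'m^'n \<Rightarrow> bool" where
  "distinct_columns A \<longleftrightarrow> (\<forall>i j. i \<noteq> j \<longrightarrow> column i A \<noteq> column j A)"

end

theory Submission
  imports Defs
begin

text \<open>Start from any SAGE decomposition \<open>c = \<Sum>k g k\<close> with \<open>g k \<in> C_AGE A k\<close> and treat the
  indices one at a time by a redistribution: for convex weights \<open>t\<close>, split \<open>g k\<close> into the pieces
  \<open>t i *\<^sub>R g k\<close> and add the \<open>i\<close>-th piece to \<open>g i\<close>. As \<open>C_NNS A\<close> is a convex cone, every summand
  stays in its AGE cone as long as the \<open>k\<close>-th coordinates of the other summands stay nonnegative.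
  If \<open>c $ k < 0\<close>, the weights \<open>t i = - g i $ k / g k $ k\<close> (\<open>i \<noteq> k\<close>) cancel the \<open>k\<close>-th coordinates
  of all other summands. If \<open>c $ k \<ge> 0\<close>, the mass \<open>\<Sum>i\<noteq>k. g i $ k \<ge> 0\<close> outweighs \<open>- g k $ k\<close>, so
  \<open>g k\<close> can be absorbed completely into the others: proportionally to the \<open>g i $ k\<close>, or, when
  \<open>g k\<close> is nonnegative, into a single summand with \<open>c $ i < 0\<close>. Neither move spoils earlier steps:
  eliminated summands receive weight \<open>0\<close>, and \<open>g k\<close> vanishes on coordinates cleared before.\<close>

lemma Sig_add: "Sig A (u + v) x = Sig A u x + Sig A v x"
  unfolding Sig_def by (simp add: distrib_right sum.distrib)

lemma Sig_scaleR: "Sig A (r *\<^sub>R u) x = r * Sig A u x"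
  unfolding Sig_def by (simp add: sum_distrib_left mult.assoc)

lemma C_NNS_add: "u \<in> C_NNS A \<Longrightarrow> v \<in> C_NNS A \<Longrightarrow> u + v \<in> C_NNS A"
  unfolding C_NNS_def by (simp add: Sig_add)

lemma C_NNS_scaleR: "0 \<le> r \<Longrightarrow> u \<in> C_NNS A \<Longrightarrow> r *\<^sub>R u \<in> C_NNS A"
  unfolding C_NNS_def by (simp add: Sig_scaleR)

definition redistribute :: "('m \<Rightarrow> 'v::real_vector) \<Rightarrow> 'm \<Rightarrow> ('m \<Rightarrow> real) \<Rightarrow> 'm \<Rightarrow> 'v" where
  "redistribute g k t i = (if i = k then t k *\<^sub>R g k else g i + t i *\<^sub>R g k)"

lemma sum_redistribute:
  fixes g :: "'m::finite \<Rightarrow> 'v::real_vector"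
  assumes "(\<Sum>i\<in>UNIV. t i) = 1"
  shows "(\<Sum>i\<in>UNIV. redistribute g k t i) = (\<Sum>i\<in>UNIV. g i)"
proof -
  have "(\<Sum>i\<in>UNIV. redistribute g k t i) = (\<Sum>i\<in>UNIV. g i + t i *\<^sub>R g k) - g k"
    by (simp add: redistribute_def sum.If_cases Diff_eq[symmetric]
        sum.remove[of UNIV k "\<lambda>i. g i + t i *\<^sub>R g k"] algebra_simps)
  also have "\<dots> = (\<Sum>i\<in>UNIV. g i)"
    using assms by (simp add: sum.distrib scaleR_sum_left[symmetric])
  finally show ?thesis .
qed

lemma redistribute_in_C_AGE:
  assumes "\<forall>i. g i \<in> C_AGE A i" and "\<forall>i. 0 \<le> t i"
    and "\<forall>i. i \<noteq> k \<longrightarrow> 0 \<le> g i $ k + t i * g k $ k"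
  shows "redistribute g k t i \<in> C_AGE A i"
proof (cases "i = k")
  case True
  then show ?thesis
    using assms(1,2) by (auto simp: C_AGE_def redistribute_def intro: C_NNS_scaleR)
next
  case False
  have "0 \<le> g i $ j + t i * g k $ j" if "j \<noteq> i" for j
    using assms that by (cases "j = k") (auto simp: C_AGE_def)
  moreover have "g i + t i *\<^sub>R g k \<in> C_NNS A"
    using assms(1,2) unfolding C_AGE_def by (blast intro: C_NNS_add C_NNS_scaleR)
  ultimately show ?thesis
    using False by (simp add: C_AGE_def redistribute_def)
qed

lemma clearing_weights:
  fixes x :: "'m::finite \<Rightarrow> real"
  assumes nonneg: "\<forall>i. i \<noteq> k \<longrightarrow> 0 \<le> x i" and neg: "(\<Sum>i\<in>UNIV. x i) < 0"
  obtains t where "\<forall>i. 0 \<le> t i" "(\<Sum>i\<in>UNIV. t i) = 1"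
    "\<forall>i. i \<noteq> k \<longrightarrow> x i + t i * x k = 0" "\<forall>i. i \<noteq> k \<longrightarrow> x i = 0 \<longrightarrow> t i = 0"
proof -
  define S where "S = (\<Sum>i\<in>UNIV - {k}. x i)"
  have sum_x: "(\<Sum>i\<in>UNIV. x i) = x k + S"
    unfolding S_def by (simp add: sum.remove[of UNIV k])
  have "0 \<le> S"
    unfolding S_def using nonneg by (intro sum_nonneg) auto
  with neg sum_x have xk: "x k < 0" and "S < - x k" by auto
  define t where "t i = (if i = k then 1 + S / x k else - x i / x k)" for i
  have "(\<Sum>i\<in>UNIV - {k}. t i) = - S / x k"
    unfolding S_def t_def by (simp add: sum_negf sum_divide_distrib)
  then have "(\<Sum>i\<in>UNIV. t i) = 1"
    by (simp add: sum.remove[of UNIV k] t_def)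
  moreover have "\<forall>i. 0 \<le> t i"
    using nonneg xk \<open>S < - x k\<close> by (auto simp: t_def field_simps)
  ultimately show ?thesis
    using xk by (intro that) (auto simp: t_def)
qed

lemma eliminating_weights:
  fixes x :: "'m::finite \<Rightarrow> real"
  assumes nonneg: "\<forall>i. i \<noteq> k \<longrightarrow> 0 \<le> x i" and "0 \<le> (\<Sum>i\<in>UNIV. x i)" and "i0 \<noteq> k"
  obtains t where "\<forall>i. 0 \<le> t i" "(\<Sum>i\<in>UNIV. t i) = 1" "t k = 0"
    "\<forall>i. i \<noteq> k \<longrightarrow> 0 \<le> x i + t i * x k" "\<forall>i. i \<noteq> i0 \<longrightarrow> x i = 0 \<longrightarrow> t i = 0"
proof (cases "0 \<le> x k")
  case True
  define t where "t i = (if i = i0 then 1 else 0::real)" for i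
  show ?thesis
    using that[of t] True nonneg \<open>i0 \<noteq> k\<close> by (auto simp: t_def)
next
  case False
  define S where "S = (\<Sum>i\<in>UNIV - {k}. x i)"
  have "(\<Sum>i\<in>UNIV. x i) = x k + S"
    unfolding S_def by (simp add: sum.remove[of UNIV k])
  with False \<open>0 \<le> (\<Sum>i\<in>UNIV. x i)\<close> have "0 < S" "- x k \<le> S" by auto
  define t where "t i = (if i = k then 0 else x i / S)" for i
  have "(\<Sum>i\<in>UNIV - {k}. t i) = 1"
    using \<open>0 < S\<close> unfolding S_def t_def by (simp add: sum_divide_distrib[symmetric])
  then have "(\<Sum>i\<in>UNIV. t i) = 1"
    by (simp add: sum.remove[of UNIV k] t_def)
  moreover have "\<forall>i. i \<noteq> k \<longrightarrow> 0 \<le> x i + t i * x k"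
  proof (intro allI impI)
    fix i assume "i \<noteq> k"
    have "x i + t i * x k = x i * (1 + x k / S)"
      using \<open>i \<noteq> k\<close> by (simp add: t_def algebra_simps)
    moreover have "0 \<le> 1 + x k / S"
      using \<open>0 < S\<close> \<open>- x k \<le> S\<close> by (simp add: field_simps)
    ultimately show "0 \<le> x i + t i * x k"
      using nonneg \<open>i \<noteq> k\<close> by simp
  qed
  moreover have "\<forall>i. 0 \<le> t i"
    using nonneg \<open>0 < S\<close> by (simp add: t_def)
  moreover have "t k = 0" "\<forall>i. i \<noteq> i0 \<longrightarrow> x i = 0 \<longrightarrow> t i = 0"
    by (simp_all add: t_def)
  ultimately show ?thesis
    using that by blast
qed

definition SAGE_decomposition :: "real^'m^'n \<Rightarrow> real^'m \<Rightarrow> ('m \<Rightarrow> real^'m) \<Rightarrow> bool" where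
  "SAGE_decomposition A c g \<longleftrightarrow> (\<forall>i. g i \<in> C_AGE A i) \<and> (\<Sum>i\<in>UNIV. g i) = c"

definition reduced_on :: "'m set \<Rightarrow> 'm set \<Rightarrow> ('m \<Rightarrow> 'a::zero^'m) \<Rightarrow> bool" where
  "reduced_on N K g \<longleftrightarrow>
     (\<forall>k\<in>K - N. g k = 0) \<and> (\<forall>j\<in>K \<inter> N. \<forall>i. i \<noteq> j \<longrightarrow> g i $ j = 0)"

lemma SAGE_decomposition_redistribute:
  assumes "SAGE_decomposition A c g" and "\<forall>i. 0 \<le> t i" and "(\<Sum>i\<in>UNIV. t i) = 1"
    and "\<forall>i. i \<noteq> k \<longrightarrow> 0 \<le> g i $ k + t i * g k $ k"
  shows "SAGE_decomposition A c (redistribute g k t)"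
  using assms redistribute_in_C_AGE[of g A t k]
  by (simp add: SAGE_decomposition_def sum_redistribute)

lemma reduced_on_redistribute_insert:
  fixes g :: "'m \<Rightarrow> real^'m"
  assumes "reduced_on N F g" and "k \<notin> F" and "\<forall>k'\<in>F - N. t k' = 0"
    and "k \<notin> N \<Longrightarrow> redistribute g k t k = 0"
    and "k \<in> N \<Longrightarrow> \<forall>i. i \<noteq> k \<longrightarrow> redistribute g k t i $ k = 0"
  shows "reduced_on N (insert k F) (redistribute g k t)"
proof -
  have "redistribute g k t k' = 0" if "k' \<in> F - N" for k'
    using assms(1-3) that by (auto simp: reduced_on_def redistribute_def)
  moreover have "redistribute g k t i $ j = 0" if "j \<in> F \<inter> N" "i \<noteq> j" for i j
  proof -
    have "k \<noteq> j"
      using assms(2) that(1) by auto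
    with assms(1) that have "g i $ j = 0" "g k $ j = 0"
      by (auto simp: reduced_on_def)
    then show ?thesis
      by (simp add: redistribute_def)
  qed
  ultimately show ?thesis
    using assms(4,5) by (auto simp: reduced_on_def)
qed

lemma reduced_on_insert:
  assumes dec: "SAGE_decomposition A c g" and red: "reduced_on N F g" and "k \<notin> F"
    and N: "N = {i. c $ i < 0}" "N \<noteq> {}"
  obtains g' where "SAGE_decomposition A c g'" "reduced_on N (insert k F) g'"
proof -
  let ?x = "\<lambda>i. g i $ k"
  have x_nonneg: "\<forall>i. i \<noteq> k \<longrightarrow> 0 \<le> ?x i"
    using dec by (auto simp: SAGE_decomposition_def C_AGE_def)
  have c_k: "c $ k = (\<Sum>i\<in>UNIV. ?x i)"
    using dec by (auto simp: SAGE_decomposition_def sum_component)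
  have eliminated: "\<forall>k'\<in>F - N. g k' = 0"
    using red by (simp add: reduced_on_def)
  show ?thesis
  proof (cases "k \<in> N")
    case True
    then have "(\<Sum>i\<in>UNIV. ?x i) < 0"
      using N c_k by simp
    then obtain t where t: "\<forall>i. 0 \<le> t i" "(\<Sum>i\<in>UNIV. t i) = 1"
      "\<forall>i. i \<noteq> k \<longrightarrow> ?x i + t i * ?x k = 0" "\<forall>i. i \<noteq> k \<longrightarrow> ?x i = 0 \<longrightarrow> t i = 0"
      using clearing_weights[OF x_nonneg] by blast
    have "reduced_on N (insert k F) (redistribute g k t)"
      using red \<open>k \<notin> F\<close>
    proof (rule reduced_on_redistribute_insert)
      show "\<forall>k'\<in>F - N. t k' = 0"
        using t(4) eliminated \<open>k \<notin> F\<close> by auto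
      show "k \<in> N \<Longrightarrow> \<forall>i. i \<noteq> k \<longrightarrow> redistribute g k t i $ k = 0"
        using t(3) by (simp add: redistribute_def)
    qed (use True in simp)
    moreover have "SAGE_decomposition A c (redistribute g k t)"
      using dec t(1,2) by (rule SAGE_decomposition_redistribute) (use t(3) in simp)
    ultimately show ?thesis
      using that by blast
  next
    case False
    obtain i0 where "i0 \<in> N"
      using N(2) by blast
    with False have "0 \<le> (\<Sum>i\<in>UNIV. ?x i)" "i0 \<noteq> k"
      using N c_k by auto
    then obtain t where t: "\<forall>i. 0 \<le> t i" "(\<Sum>i\<in>UNIV. t i) = 1" "t k = 0"
      "\<forall>i. i \<noteq> k \<longrightarrow> 0 \<le> ?x i + t i * ?x k" "\<forall>i. i \<noteq> i0 \<longrightarrow> ?x i = 0 \<longrightarrow> t i = 0"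
      using eliminating_weights[OF x_nonneg] by blast
    have "reduced_on N (insert k F) (redistribute g k t)"
      using red \<open>k \<notin> F\<close>
    proof (rule reduced_on_redistribute_insert)
      show "\<forall>k'\<in>F - N. t k' = 0"
        using t(5) eliminated \<open>i0 \<in> N\<close> by auto
      show "redistribute g k t k = 0"
        using t(3) by (simp add: redistribute_def)
    qed (use False in simp)
    moreover have "SAGE_decomposition A c (redistribute g k t)"
      using dec t(1,2,4) by (rule SAGE_decomposition_redistribute)
    ultimately show ?thesis
      using that by blast
  qed
qed

lemma C_SAGE_reduced_decomposition:
  assumes "c \<in> C_SAGE A" and N: "N = {i. c $ i < 0}" "N \<noteq> {}"
  obtains g where "SAGE_decomposition A c g" "reduced_on N K g"
proof -
  have "\<exists>g. SAGE_decomposition A c g \<and> reduced_on N K g"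
    using finite[of K]
  proof (induction K rule: finite_induct)
    case empty
    then show ?case
      using \<open>c \<in> C_SAGE A\<close> by (auto simp: C_SAGE_def SAGE_decomposition_def reduced_on_def)
  next
    case (insert k F)
    then show ?case
      using reduced_on_insert[OF _ _ _ N] by meson
  qed
  then show ?thesis
    using that by blast
qed

theorem mainTheorem2:
  fixes A :: "real^'m^'n" and c :: "real^'m"
  assumes "distinct_columns A"
    and "c \<in> C_SAGE A"
    and "{i. c $ i < 0} \<noteq> {}"
  shows "\<exists>cc :: 'm \<Rightarrow> real^'m.
           (\<forall>i\<in>{i. c $ i < 0}. cc i \<in> C_AGE A i)
         \<and> c = (\<Sum>i\<in>{i. c $ i < 0}. cc i)
         \<and> (\<forall>i\<in>{i. c $ i < 0}. \<forall>j\<in>{i. c $ i < 0}. i \<noteq> j \<longrightarrow> cc i $ j = 0)"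
proof -
  let ?N = "{i. c $ i < 0}"
  obtain g where "SAGE_decomposition A c g" "reduced_on ?N UNIV g"
    using C_SAGE_reduced_decomposition[OF assms(2) refl assms(3)] .
  then have g: "\<forall>i. g i \<in> C_AGE A i" "c = (\<Sum>i\<in>UNIV. g i)"
    and eliminated: "\<forall>k\<in>UNIV - ?N. g k = 0"
    and cleared: "\<forall>j\<in>?N. \<forall>i. i \<noteq> j \<longrightarrow> g i $ j = 0"
    by (auto simp: SAGE_decomposition_def reduced_on_def)
  have "(\<Sum>i\<in>UNIV. g i) = (\<Sum>i\<in>?N. g i)"
    using eliminated by (intro sum.mono_neutral_right) auto
  with g cleared show ?thesis
    by (intro exI[of _ g] conjI) blast+
qed

end
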